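(* Assume $\kappa\ge\|f'\|_{C[-\beta,\beta]}$, $\|\phi^0\|_\infty\le\beta$ and $\tau_1<(\kappa m\Gamma(2-\alpha))^{-1/\alpha}$, and let $\{(\phi^n,R^n)\}$ be generated by the $L1$-sESAV scheme. Then for every $k\ge1$, $$\mathcal E_h[\phi^k,R^k]-\mathcal E_h[\phi^{k-1},R^{k-1}]\le-\frac{\varepsilon^2}{2}\|\nabla_h(\phi^k-\phi^{k-1})\|^2-\frac1m\langle\mathbb D^\alpha_\tau\phi^k,\nabla_\tau\phi^k\rangle.$$
   Context: Setting: $\Omega=(0,L)^2$ with periodic boundary conditions; constants $m>0$, $\varepsilon>0$, $\alpha\in(0,1)$. The nonlinearity $f=-F'$ is one of: (double-well) $F(\phi)=\frac14(1-\phi^2)^2$, $f(\phi)=\phi-\phi^3$, with $\beta=1$; or (Flory–Huggins) $F(\phi)=\frac{\theta}{2}[(1+\phi)\ln(1+\phi)+(1-\phi)\ln(1-\phi)]-\frac{\theta_c}{2}\phi^2$, $f(\phi)=\frac{\theta}{2}\ln\frac{1-\phi}{1+\phi}+\theta_c\phi$ on $(-1,1)$, with $\theta_c>\theta>0$ and $\beta\in(0,1)$ the positive root of $f$. In both cases $f(\pm\beta)=0$. Spatial discretization: $M\in\mathbb N$, $h=L/M$; $\mathbb V_h$ is the space of real grid functions $v=\{v_{ij}\}_{i,j\in\mathbb Z}$ that are $M$-periodic in each index; $\langle v,w\rangle=h^2\sum_{i,j=1}^Mv_{ij}w_{ij}$, $\|v\|=\sqrt{\langle v,v\rangle}$, $\|v\|_\infty=\max_{1\le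 i,j\le M}|v_{ij}|$, $\mathbb V_\beta=\{v\in\mathbb V_h:\|v\|_\infty\le\beta\}$; $\Delta_hv_{ij}=h^{-2}(v_{i+1,j}+v_{i-1,j}+v_{i,j+1}+v_{i,j-1}-4v_{ij})$; $\nabla_hv_{ij}=\big(\frac{v_{i+1,j}-v_{ij}}h,\frac{v_{i,j+1}-v_{ij}}h\big)$ and $\|\nabla_hv\|^2=h^2\sum_{i,j=1}^M|\nabla_hv_{ij}|^2$. Scalar functions act on grid functions pointwise. $E_{1h}[v]=\langle F(v),1\rangle$ and $g_h(v,w)=\exp(w)/\exp(E_{1h}[v])$ for $v\in\mathbb V_h$ (with $\|v\|_\infty<1$ in the Flory–Huggins case) and $w\in\mathbb R$. The discrete modified energy is $\mathcal E_h[\phi,R]=\frac{\varepsilon^2}{2}\|\nabla_h\phi\|^2+R$. Auxiliary functional: $V:\mathbb R\to\mathbb R$ satisfies (A1) $V\in C^1(\mathbb R)\cap W^{2,\infty}(\mathbb R)$, $V(1)=1$, $V'(1)=0$, $|V'|\le K_1$; (A2) $0\le V\le K_2$ for a constant $K_2>0$; (A3) $|z_1-1|\le|z_2-1|$ implies $|V(z_1)-1|\le|V(z_2)-1|$. Time grid: $0=t_0<t_1<\dots<t_N=T$, $\tau_k=t_k-t_{k-1}$, $r_k=\tau_k/\tau_{k-1}$ ($k\ge2$), $\nabla_\tau v^k=v^k-v^{k-1}$, $\mathbb D_\tau v^k=\nabla_\tau v^k/\tau_k$, $\omega_\mu(t)=t^{\mu-1}/\Gamma(\mu)$. Constant $\kappa\ge0$;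 data $\phi^0\in\mathbb V_h$, $R^0\in\mathbb R$. For $n\ge2$ the predicted solution is $\hat\phi^n=\min\{\max\{(1+r_n)\phi^{n-1}-r_n\phi^{n-2},-\beta\},\beta\}$ (pointwise). $L1$-sESAV scheme: $A^{(n)}_{n-k}=\frac1{\tau_k}\int_{t_{k-1}}^{t_k}\omega_{1-\alpha}(t_n-s)\,ds$ and $\mathbb D^\alpha_\tau v^n=\sum_{k=1}^nA^{(n)}_{n-k}\nabla_\tau v^k$. For $n=1$, $\hat\phi^1\in\mathbb V_\beta$ is the solution of the nonlinear first-step equation $A^{(1)}_0(\hat\phi^1-\phi^0)=m(\varepsilon^2\Delta_h\hat\phi^1+f(\hat\phi^1))$. For $n\ge1$, with $V^n:=V(g_h(\hat\phi^n,R^{n-1}))$, $(\phi^n,R^n)$ is defined by $\mathbb D^\alpha_\tau\phi^n=m(\varepsilon^2\Delta_h\phi^n+V^nf(\hat\phi^n)-\kappa V^n(\phi^n-\hat\phi^n))$ and $\mathbb D_\tau R^n=V^n\langle-f(\hat\phi^n)+\kappa(\phi^n-\hat\phi^n),\mathbb D_\tau\phi^n\rangle$. *)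

theory Defs
  imports "HOL-Analysis.Analysis"
begin

type_synonym grid = "int \<Rightarrow> int \<Rightarrow> real"

definition periodic_grid :: "nat \<Rightarrow> grid \<Rightarrow> bool" where
  "periodic_grid M v \<longleftrightarrow> (\<forall>i j. v (i + int M) j = v i j \<and> v i (j + int M) = v i j)"

definition inner_h :: "nat \<Rightarrow> real \<Rightarrow> grid \<Rightarrow> grid \<Rightarrow> real" where
  "inner_h M h v w = h\<^sup>2 * (\<Sum>i\<in>{1..int M}. \<Sum>j\<in>{1..int M}. v i j * w i j)"

definition maxnorm_h :: "nat \<Rightarrow> grid \<Rightarrow> real" where
  "maxnorm_h M v = Max {\<bar>v i j\<bar> | i j. i \<in> {1..int M} \<and> j \<in> {1..int M}}"

definition lap_h :: "real \<Rightarrow> grid \<Rightarrow> grid" where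
  "lap_h h v = (\<lambda>i j. (v (i+1) j + v (i-1) j + v i (j+1) + v i (j-1) - 4 * v i j) / h\<^sup>2)"

definition grad_norm_sq :: "nat \<Rightarrow> real \<Rightarrow> grid \<Rightarrow> real" where
  "grad_norm_sq M h v = h\<^sup>2 * (\<Sum>i\<in>{1..int M}. \<Sum>j\<in>{1..int M}.
      ((v (i+1) j - v i j) / h)\<^sup>2 + ((v i (j+1) - v i j) / h)\<^sup>2)"

definition E1h :: "nat \<Rightarrow> real \<Rightarrow> (real \<Rightarrow> real) \<Rightarrow> grid \<Rightarrow> real" where
  "E1h M h F v = inner_h M h (\<lambda>i j. F (v i j)) (\<lambda>i j. 1)"

definition g_h :: "nat \<Rightarrow> real \<Rightarrow> (real \<Rightarrow> real) \<Rightarrow> grid \<Rightarrow> real \<Rightarrow> real" where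
  "g_h M h F v w = exp w / exp (E1h M h F v)"

definition energy_h :: "nat \<Rightarrow> real \<Rightarrow> real \<Rightarrow> grid \<Rightarrow> real \<Rightarrow> real" where
  "energy_h M h \<epsilon> \<phi> R = \<epsilon>\<^sup>2 / 2 * grad_norm_sq M h \<phi> + R"

text \<open>The two admissible nonlinearities (double-well and Flory--Huggins), with f = -F'
  and beta as specified.\<close>
definition admissible_nonlinearity :: "(real \<Rightarrow> real) \<Rightarrow> (real \<Rightarrow> real) \<Rightarrow> real \<Rightarrow> bool" where
  "admissible_nonlinearity F f \<beta> \<longleftrightarrow>
     (F = (\<lambda>x. (1 - x\<^sup>2)\<^sup>2 / 4) \<and> f = (\<lambda>x. x - x ^ 3) \<and> \<beta> = 1) \<or>
     (\<exists>\<theta> \<theta>c. 0 < \<theta> \<and> \<theta> < \<theta>c \<and>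
        F = (\<lambda>x. \<theta> / 2 * ((1 + x) * ln (1 + x) + (1 - x) * ln (1 - x)) - \<theta>c / 2 * x\<^sup>2) \<and>
        f = (\<lambda>x. \<theta> / 2 * ln ((1 - x) / (1 + x)) + \<theta>c * x) \<and>
        0 < \<beta> \<and> \<beta> < 1 \<and> f \<beta> = 0)"

text \<open>Assumptions (A1)--(A3) on the auxiliary functional V. W^{2,infinity} for a C^1
  function is rendered as: V bounded and V' Lipschitz (hence bounded derivative).\<close>
definition aux_functional :: "(real \<Rightarrow> real) \<Rightarrow> real \<Rightarrow> real \<Rightarrow> bool" where
  "aux_functional V K1 K2 \<longleftrightarrow>
     (\<forall>x. V differentiable (at x)) \<and> continuous_on UNIV (deriv V) \<and>
     (\<exists>C. \<forall>x y. \<bar>deriv V x - deriv V y\<bar> \<le> C * \<bar>x - y\<bar>) \<and>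
     V 1 = 1 \<and> deriv V 1 = 0 \<and> (\<forall>x. \<bar>deriv V x\<bar> \<le> K1) \<and>
     0 < K2 \<and> (\<forall>x. 0 \<le> V x \<and> V x \<le> K2) \<and>
     (\<forall>z1 z2. \<bar>z1 - 1\<bar> \<le> \<bar>z2 - 1\<bar> \<longrightarrow> \<bar>V z1 - 1\<bar> \<le> \<bar>V z2 - 1\<bar>)"

definition omega :: "real \<Rightarrow> real \<Rightarrow> real" where
  "omega \<mu> t = t powr (\<mu> - 1) / Gamma \<mu>"

definition L1_coef :: "(nat \<Rightarrow> real) \<Rightarrow> real \<Rightarrow> nat \<Rightarrow> nat \<Rightarrow> real" where
  "L1_coef t \<alpha> n k = (1 / (t k - t (k - 1))) *
      integral {t (k - 1) .. t k} (\<lambda>s. omega (1 - \<alpha>) (t n - s))"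

definition L1_caputo :: "(nat \<Rightarrow> real) \<Rightarrow> real \<Rightarrow> (nat \<Rightarrow> grid) \<Rightarrow> nat \<Rightarrow> grid" where
  "L1_caputo t \<alpha> v n = (\<lambda>i j. \<Sum>k\<in>{1..n}. L1_coef t \<alpha> n k * (v k i j - v (k - 1) i j))"

definition clip :: "real \<Rightarrow> real \<Rightarrow> real" where
  "clip \<beta> x = min (max x (-\<beta>)) \<beta>"

end

theory Submission
  imports Defs
begin

text \<open>The energy law holds with equality for any solution of the scheme. Testing the
  \<open>\<phi>\<close>-equation against \<open>\<nabla>\<^sub>\<tau>\<phi>\<^sup>k\<close> and comparing with the \<open>R\<close>-equation shows that the increment
  of \<open>R\<close> equals \<open>\<epsilon>\<^sup>2\<langle>\<Delta>\<^sub>h\<phi>\<^sup>k, \<nabla>\<^sub>\<tau>\<phi>\<^sup>k\<rangle> - \<langle>D\<^sup>\<alpha>\<^sub>\<tau>\<phi>\<^sup>k, \<nabla>\<^sub>\<tau>\<phi>\<^sup>k\<rangle>/m\<close>: the stabilised nonlinear term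
  cancels exactly. Summation by parts on the periodic grid turns \<open>\<langle>\<Delta>\<^sub>h a, a - b\<rangle>\<close> into
  \<open>-\<langle>\<nabla>\<^sub>h a, \<nabla>\<^sub>h (a - b)\<rangle>\<close>, and the polarisation identity
  \<open>2\<langle>\<nabla>\<^sub>h a, \<nabla>\<^sub>h (a - b)\<rangle> = \<parallel>\<nabla>\<^sub>h a\<parallel>\<^sup>2 - \<parallel>\<nabla>\<^sub>h b\<parallel>\<^sup>2 + \<parallel>\<nabla>\<^sub>h (a - b)\<parallel>\<^sup>2\<close> gives the rest.\<close>

lemma sum_periodic_shift:
  fixes u :: "int \<Rightarrow> 'a::comm_monoid_add"
  assumes "\<forall>i. u (i + int M) = u i"
  shows "(\<Sum>i\<in>{1..int M}. u (i + 1)) = (\<Sum>i\<in>{1..int M}. u i)"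
proof (cases "M = 0")
  case False
  then have "{1..int M} = insert 1 {2..int M}" "{2..int M + 1} = insert (int M + 1) {2..int M}"
    by auto
  have "(\<Sum>i\<in>{1..int M}. u (i + 1)) = sum u {2..int M + 1}"
    by (rule sum.reindex_bij_witness[of _ "\<lambda>i. i - 1" "\<lambda>i. i + 1"]) auto
  also have "\<dots> = u (int M + 1) + sum u {2..int M}"
    using \<open>{2..int M + 1} = insert (int M + 1) {2..int M}\<close> by simp
  also have "\<dots> = u 1 + sum u {2..int M}"
    using assms by (metis add.commute)
  also have "\<dots> = sum u {1..int M}"
    using \<open>{1..int M} = insert 1 {2..int M}\<close> by simp
  finally show ?thesis .
qed simp

lemma sum_periodic_by_parts:
  fixes u v :: "int \<Rightarrow> real"
  assumes u: "\<forall>i. u (i + int M) = u i" and v: "\<forall>i. v (i + int M) = v i"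
  shows "(\<Sum>i\<in>{1..int M}. (u (i + 1) - u i) * (v (i + 1) - v i))
       = - (\<Sum>i\<in>{1..int M}. (u (i + 1) - 2 * u i + u (i - 1)) * v i)"
proof -
  have uv: "(\<Sum>i\<in>{1..int M}. u (i + 1) * v (i + 1)) = (\<Sum>i\<in>{1..int M}. u i * v i)"
    using sum_periodic_shift[of "\<lambda>i. u i * v i" M] u v by simp
  have "\<forall>i. u (i + int M - 1) = u (i - 1)"
    using u by (metis diff_add_eq)
  then have uv': "(\<Sum>i\<in>{1..int M}. u i * v (i + 1)) = (\<Sum>i\<in>{1..int M}. u (i - 1) * v i)"
    using sum_periodic_shift[of "\<lambda>i. u (i - 1) * v i" M] v by simp
  show ?thesis
    using uv uv' by (simp add: algebra_simps sum.distrib sum_subtractf sum_distrib_left)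
qed

definition grad_inner_h :: "nat \<Rightarrow> real \<Rightarrow> grid \<Rightarrow> grid \<Rightarrow> real" where
  "grad_inner_h M h u v = h\<^sup>2 * (\<Sum>i\<in>{1..int M}. \<Sum>j\<in>{1..int M}.
      (u (i+1) j - u i j) / h * ((v (i+1) j - v i j) / h)
    + (u i (j+1) - u i j) / h * ((v i (j+1) - v i j) / h))"

lemma grad_inner_h_unscaled:
  assumes "h \<noteq> 0"
  shows "grad_inner_h M h u v = (\<Sum>i\<in>{1..int M}. \<Sum>j\<in>{1..int M}.
      (u (i+1) j - u i j) * (v (i+1) j - v i j) + (u i (j+1) - u i j) * (v i (j+1) - v i j))"
  unfolding grad_inner_h_def sum_distrib_left using assms
  by (intro sum.cong refl) (simp add: power2_eq_square field_simps)

lemma inner_h_lap_h: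
  assumes "h \<noteq> 0" and a: "periodic_grid M a" and d: "periodic_grid M d"
  shows "inner_h M h (lap_h h a) d = - grad_inner_h M h a d"
proof -
  have x: "(\<Sum>i\<in>{1..int M}. (a (i+1) j - a i j) * (d (i+1) j - d i j))
      = - (\<Sum>i\<in>{1..int M}. (a (i+1) j - 2 * a i j + a (i-1) j) * d i j)" for j
    using a d unfolding periodic_grid_def by (intro sum_periodic_by_parts) auto
  have y: "(\<Sum>j\<in>{1..int M}. (a i (j+1) - a i j) * (d i (j+1) - d i j))
      = - (\<Sum>j\<in>{1..int M}. (a i (j+1) - 2 * a i j + a i (j-1)) * d i j)" for i
    using a d unfolding periodic_grid_def by (intro sum_periodic_by_parts) auto
  have "grad_inner_h M h a d
      = (\<Sum>i\<in>{1..int M}. \<Sum>j\<in>{1..int M}. (a (i+1) j - a i j) * (d (i+1) j - d i j))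
      + (\<Sum>i\<in>{1..int M}. \<Sum>j\<in>{1..int M}. (a i (j+1) - a i j) * (d i (j+1) - d i j))"
    unfolding grad_inner_h_unscaled[OF \<open>h \<noteq> 0\<close>] by (simp only: sum.distrib)
  also have "\<dots> = (\<Sum>j\<in>{1..int M}. \<Sum>i\<in>{1..int M}. (a (i+1) j - a i j) * (d (i+1) j - d i j))
      + (\<Sum>i\<in>{1..int M}. \<Sum>j\<in>{1..int M}. (a i (j+1) - a i j) * (d i (j+1) - d i j))"
    by (subst sum.swap) (rule refl)
  also have "\<dots> = - (\<Sum>j\<in>{1..int M}. \<Sum>i\<in>{1..int M}. (a (i+1) j - 2 * a i j + a (i-1) j) * d i j)
      - (\<Sum>i\<in>{1..int M}. \<Sum>j\<in>{1..int M}. (a i (j+1) - 2 * a i j + a i (j-1)) * d i j)"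
    by (simp only: x y sum_negf)
  also have "\<dots> = - (\<Sum>i\<in>{1..int M}. \<Sum>j\<in>{1..int M}. (a (i+1) j - 2 * a i j + a (i-1) j) * d i j)
      - (\<Sum>i\<in>{1..int M}. \<Sum>j\<in>{1..int M}. (a i (j+1) - 2 * a i j + a i (j-1)) * d i j)"
    by (subst (2) sum.swap) (rule refl)
  also have "\<dots> = - (\<Sum>i\<in>{1..int M}. \<Sum>j\<in>{1..int M}.
      (a (i+1) j + a (i-1) j + a i (j+1) + a i (j-1) - 4 * a i j) * d i j)"
    by (simp add: sum.distrib[symmetric] algebra_simps)
  also have "\<dots> = - inner_h M h (lap_h h a) d"
    unfolding inner_h_def lap_h_def using \<open>h \<noteq> 0\<close> by (simp add: sum_distrib_left)
  finally show ?thesis by simp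
qed

lemma grad_norm_sq_polarization:
  "grad_norm_sq M h a - grad_norm_sq M h b + grad_norm_sq M h (\<lambda>i j. a i j - b i j)
    = 2 * grad_inner_h M h a (\<lambda>i j. a i j - b i j)"
proof -
  have pointwise: "((a1 - a0) / h)\<^sup>2 + ((c1 - c0) / h)\<^sup>2 - (((b1 - b0) / h)\<^sup>2 + ((d1 - d0) / h)\<^sup>2)
      + (((a1 - b1 - (a0 - b0)) / h)\<^sup>2 + ((c1 - d1 - (c0 - d0)) / h)\<^sup>2)
    = 2 * ((a1 - a0) / h * ((a1 - b1 - (a0 - b0)) / h) + (c1 - c0) / h * ((c1 - d1 - (c0 - d0)) / h))"
    for a1 a0 b1 b0 c1 c0 d1 d0 :: real
    by (simp add: power_divide add_divide_distrib[symmetric] diff_divide_distrib[symmetric]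
        times_divide_times_eq power2_eq_square algebra_simps)
  show ?thesis
    unfolding grad_norm_sq_def grad_inner_h_def
    by (simp only: right_diff_distrib[symmetric] distrib_left[symmetric]
        sum_subtractf[symmetric] sum.distrib[symmetric])
      (subst pointwise, simp only: sum_distrib_left mult_ac)
qed

lemma inner_h_scale_left:
  "inner_h M h (\<lambda>i j. c * u i j) w = c * inner_h M h u w"
  unfolding inner_h_def by (simp add: sum_distrib_left mult_ac)

lemma inner_h_diff_left:
  "inner_h M h (\<lambda>i j. u i j - v i j) w = inner_h M h u w - inner_h M h v w"
  unfolding inner_h_def by (simp add: sum_subtractf left_diff_distrib right_diff_distrib)

lemma inner_h_divide_right:
  "inner_h M h u (\<lambda>i j. w i j / c) = inner_h M h u w / c"
  unfolding inner_h_def by (simp add: sum_divide_distrib[symmetric])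

lemma energy_h_diff_eq:
  fixes a b D g :: grid and s R0 R1 :: real
  defines "d \<equiv> \<lambda>i j. a i j - b i j"
  assumes "h \<noteq> 0" "m \<noteq> 0" and a: "periodic_grid M a" and b: "periodic_grid M b"
    and phi_eq: "\<And>i j. D i j = m * (\<epsilon>\<^sup>2 * lap_h h a i j - s * g i j)"
    and R_eq: "R1 - R0 = s * inner_h M h g d"
  shows "energy_h M h \<epsilon> a R1 - energy_h M h \<epsilon> b R0
    = - \<epsilon>\<^sup>2 / 2 * grad_norm_sq M h d - 1 / m * inner_h M h D d"
proof -
  have "periodic_grid M d"
    using a b unfolding periodic_grid_def d_def by simp
  have "(\<lambda>i j. s * g i j) = (\<lambda>i j. \<epsilon>\<^sup>2 * lap_h h a i j - 1 / m * D i j)"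
    using \<open>m \<noteq> 0\<close> by (simp add: phi_eq field_simps)
  then have "R1 - R0 = \<epsilon>\<^sup>2 * inner_h M h (lap_h h a) d - 1 / m * inner_h M h D d"
    unfolding R_eq inner_h_scale_left[symmetric] by (simp only: inner_h_diff_left inner_h_scale_left)
  also have "\<dots> = - \<epsilon>\<^sup>2 * grad_inner_h M h a d - 1 / m * inner_h M h D d"
    using inner_h_lap_h[OF \<open>h \<noteq> 0\<close> a \<open>periodic_grid M d\<close>] by simp
  finally have "R1 - R0 = - \<epsilon>\<^sup>2 * grad_inner_h M h a d - 1 / m * inner_h M h D d" .
  moreover have "\<epsilon>\<^sup>2 / 2 * grad_norm_sq M h a - \<epsilon>\<^sup>2 / 2 * grad_norm_sq M h b
      + \<epsilon>\<^sup>2 / 2 * grad_norm_sq M h d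
    = \<epsilon>\<^sup>2 / 2 * (grad_norm_sq M h a - grad_norm_sq M h b + grad_norm_sq M h d)"
    by (simp add: algebra_simps)
  moreover have "\<dots> = \<epsilon>\<^sup>2 * grad_inner_h M h a d"
    unfolding d_def grad_norm_sq_polarization by simp
  ultimately show ?thesis
    unfolding energy_h_def by linarith
qed

theorem mainTheorem5:
  fixes L m \<epsilon> \<alpha> \<kappa> \<beta> K1 K2 T :: real
    and M N :: nat
    and F f V :: "real \<Rightarrow> real"
    and t :: "nat \<Rightarrow> real"
    and \<phi> \<phi>hat :: "nat \<Rightarrow> grid"
    and R :: "nat \<Rightarrow> real"
  defines "h \<equiv> L / real M"
  defines "\<tau> \<equiv> (\<lambda>k. t k - t (k - 1))"
  assumes L_pos: "0 < L" and M_pos: "0 < M"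
    and m_pos: "0 < m" and eps_pos: "0 < \<epsilon>"
    and alpha: "0 < \<alpha>" "\<alpha> < 1"
    and nonlin: "admissible_nonlinearity F f \<beta>"
    and V_ok: "aux_functional V K1 K2"
    and grid_t: "t 0 = 0" "\<forall>k<N. t k < t (Suc k)" "t N = T" "1 \<le> N"
    and kappa: "0 \<le> \<kappa>" "\<forall>x\<in>{-\<beta>..\<beta>}. \<bar>deriv f x\<bar> \<le> \<kappa>"
    and init: "periodic_grid M (\<phi> 0)" "maxnorm_h M (\<phi> 0) \<le> \<beta>"
    and tau1: "\<tau> 1 < (\<kappa> * m * Gamma (2 - \<alpha>)) powr (-1 / \<alpha>)"
    and per: "\<forall>n\<le>N. periodic_grid M (\<phi> n)"
    and first_step: "periodic_grid M (\<phi>hat 1)" "maxnorm_h M (\<phi>hat 1) \<le> \<beta>"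
      "\<forall>i j. L1_coef t \<alpha> 1 1 * (\<phi>hat 1 i j - \<phi> 0 i j)
               = m * (\<epsilon>\<^sup>2 * lap_h h (\<phi>hat 1) i j + f (\<phi>hat 1 i j))"
    and predictor: "\<forall>n. 2 \<le> n \<and> n \<le> N \<longrightarrow>
      \<phi>hat n = (\<lambda>i j. clip \<beta> ((1 + \<tau> n / \<tau> (n - 1)) * \<phi> (n - 1) i j
                                 - (\<tau> n / \<tau> (n - 1)) * \<phi> (n - 2) i j))"
    and scheme_phi: "\<forall>n. 1 \<le> n \<and> n \<le> N \<longrightarrow> (\<forall>i j.
      L1_caputo t \<alpha> \<phi> n i j
        = m * (\<epsilon>\<^sup>2 * lap_h h (\<phi> n) i j
               + V (g_h M h F (\<phi>hat n) (R (n - 1))) * f (\<phi>hat n i j)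
               - \<kappa> * V (g_h M h F (\<phi>hat n) (R (n - 1))) * (\<phi> n i j - \<phi>hat n i j)))"
    and scheme_R: "\<forall>n. 1 \<le> n \<and> n \<le> N \<longrightarrow>
      (R n - R (n - 1)) / \<tau> n
        = V (g_h M h F (\<phi>hat n) (R (n - 1))) *
          inner_h M h (\<lambda>i j. - f (\<phi>hat n i j) + \<kappa> * (\<phi> n i j - \<phi>hat n i j))
                      (\<lambda>i j. (\<phi> n i j - \<phi> (n - 1) i j) / \<tau> n)"
  shows "\<forall>k. 1 \<le> k \<and> k \<le> N \<longrightarrow>
    energy_h M h \<epsilon> (\<phi> k) (R k) - energy_h M h \<epsilon> (\<phi> (k - 1)) (R (k - 1))
      \<le> - \<epsilon>\<^sup>2 / 2 * grad_norm_sq M h (\<lambda>i j. \<phi> k i j - \<phi> (k - 1) i j)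
         - 1 / m * inner_h M h (L1_caputo t \<alpha> \<phi> k) (\<lambda>i j. \<phi> k i j - \<phi> (k - 1) i j)"
proof (intro allI impI)
  fix k assume k: "1 \<le> k \<and> k \<le> N"
  have "h \<noteq> 0" "m \<noteq> 0"
    using L_pos M_pos m_pos unfolding h_def by simp_all
  have "k - 1 < N"
    using k by arith
  then have "t (k - 1) < t (Suc (k - 1))"
    using grid_t(2) by blast
  then have "\<tau> k \<noteq> 0"
    using k unfolding \<tau>_def by simp
  have "periodic_grid M (\<phi> k)" "periodic_grid M (\<phi> (k - 1))"
    using per k \<open>k - 1 < N\<close> by simp_all
  define s where "s = V (g_h M h F (\<phi>hat k) (R (k - 1)))"
  define g where "g = (\<lambda>i j. - f (\<phi>hat k i j) + \<kappa> * (\<phi> k i j - \<phi>hat k i j))"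
  have phi_eq: "L1_caputo t \<alpha> \<phi> k i j = m * (\<epsilon>\<^sup>2 * lap_h h (\<phi> k) i j - s * g i j)" for i j
  proof -
    have "L1_caputo t \<alpha> \<phi> k i j = m * (\<epsilon>\<^sup>2 * lap_h h (\<phi> k) i j + s * f (\<phi>hat k i j)
        - \<kappa> * s * (\<phi> k i j - \<phi>hat k i j))"
      using scheme_phi k unfolding s_def by blast
    then show ?thesis
      unfolding g_def by (simp add: algebra_simps)
  qed
  have "(R k - R (k - 1)) / \<tau> k = s * (inner_h M h g (\<lambda>i j. \<phi> k i j - \<phi> (k - 1) i j) / \<tau> k)"
    using scheme_R k unfolding s_def g_def inner_h_divide_right by blast
  then have R_eq: "R k - R (k - 1) = s * inner_h M h g (\<lambda>i j. \<phi> k i j - \<phi> (k - 1) i j)"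
    using \<open>\<tau> k \<noteq> 0\<close> by (simp add: field_simps)
  show "energy_h M h \<epsilon> (\<phi> k) (R k) - energy_h M h \<epsilon> (\<phi> (k - 1)) (R (k - 1))
      \<le> - \<epsilon>\<^sup>2 / 2 * grad_norm_sq M h (\<lambda>i j. \<phi> k i j - \<phi> (k - 1) i j)
         - 1 / m * inner_h M h (L1_caputo t \<alpha> \<phi> k) (\<lambda>i j. \<phi> k i j - \<phi> (k - 1) i j)"
    by (rule eq_refl, rule energy_h_diff_eq) fact+
qed

end
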